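(* Let $s\in S^{\mathbb{N}}$ be a directive sequence such that (primitivity) for every $n$ there is $k\ge n$ with $M_{[n,k)}>0$ entrywise, and (strong convergence) $\sum_n|||\pi_vM_{[0,n)}|||_1$ converges for some vector $v\in\mathbb{R}_+^{d+1}\setminus\{0\}$. Then for every letter $a\in A$ and every fixed point $u$ of $s$, $$R_a(u_0)=\Big\{\sum_{n=0}^\infty\pi_v(M_{[0,n)}t_n)\ \Big|\ \cdots\xrightarrow{t_n,s_n}\cdots\xrightarrow{t_0,s_0}a \text{ is a left-infinite path in }\mathcal{A}\Big\}.$$ In particular the Rauzy fractal does not depend on the choice of the fixed point $u$, and it is compact.
   Context: $d\ge1$, $A=\{0,\dots,d\}$, $h(y)=\sum_iy_i$, $P=\{h=0\}$; for $v\in\mathbb{R}_+^{d+1}\setminus\{0\}$, $\pi_v(z)=z-h(z)v/h(v)$ is the projection onto $P$ along $v$; $|||\cdot|||_1$ is the $\ell^1$ operator norm. $S$ is a finite set of unimodular substitutions on $A$ (morphisms of $A^*$ with non-empty images of letters, $|\det\mathrm{ab}(\sigma)|=1$, where $\mathrm{ab}$ is abelianization: $\mathrm{ab}(w)$ counts letters of $w$). For $s=(s_k)$: $M_k=\mathrm{ab}(s_k)$, $M_{[k,n)}=M_k\cdots M_{n-1}$. A fixed point of $s$ is $(u_k)$ with $s_k(u_{k+1})=u_k$ for all $k$. Abelianized prefix automaton $\mathcal{A}$: states $A$, transitions $a\xrightarrow{t,\sigma}b$ ($\sigma\in S$, $t\in\mathbb{Z}^{d+1}$) iff $\sigma(a)=pbq$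 for words $p,q$ with $\mathrm{ab}(p)=t$. A left-infinite path $\cdots\xrightarrow{t_n,s_n}\cdots\xrightarrow{t_0,s_0}a$ is a sequence of states $a_0=a,a_1,a_2,\dots$ with $a_{k+1}\xrightarrow{t_k,s_k}a_k$ a transition for all $k$. For an infinite word $w$ and $a\in A$, $W_a(w)=\{\mathrm{ab}(p):pa\text{ prefix of }w\}$, and $R_a(u_0)=\overline{\pi_v(W_a(u_0))}$, the Rauzy fractal being $R(u_0)=\bigcup_aR_a(u_0)$. *)

theory Defs
  imports "HOL-Analysis.Analysis"
begin

text \<open>Alphabet: a finite type 'a (so A = UNIV, d+1 = CARD('a)).
  Vectors in R^(d+1): real^'a. Substitutions: 'a \<Rightarrow> 'a list.
  Infinite words: nat \<Rightarrow> 'a.\<close>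

definition ab :: "'a::finite list \<Rightarrow> real^'a" where
  "ab w = (\<chi> b. real (count_list w b))"

definition ab_mat :: "('a::finite \<Rightarrow> 'a list) \<Rightarrow> real^'a^'a" where
  "ab_mat \<sigma> = (\<chi> i j. real (count_list (\<sigma> j) i))"

definition unimodular_subst :: "('a::finite \<Rightarrow> 'a list) \<Rightarrow> bool" where
  "unimodular_subst \<sigma> \<longleftrightarrow> (\<forall>a. \<sigma> a \<noteq> []) \<and> \<bar>det (ab_mat \<sigma>)\<bar> = 1"

text \<open>mprod s k m = M_k ** ... ** M_(k+m-1), i.e. M_[k,k+m).\<close>
fun mprod :: "(nat \<Rightarrow> ('a::finite \<Rightarrow> 'a list)) \<Rightarrow> nat \<Rightarrow> nat \<Rightarrow> real^'a^'a" where
  "mprod s k 0 = mat 1"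
| "mprod s k (Suc m) = mprod s k m ** ab_mat (s (k + m))"

definition Mint :: "(nat \<Rightarrow> ('a::finite \<Rightarrow> 'a list)) \<Rightarrow> nat \<Rightarrow> nat \<Rightarrow> real^'a^'a" where
  "Mint s k n = mprod s k (n - k)"

definition hsum :: "real^'a::finite \<Rightarrow> real" where
  "hsum y = (\<Sum>i\<in>UNIV. y $ i)"

definition proj :: "real^'a::finite \<Rightarrow> real^'a \<Rightarrow> real^'a" where
  "proj v z = z - (hsum z / hsum v) *\<^sub>R v"

definition norm1 :: "real^'a::finite \<Rightarrow> real" where
  "norm1 x = (\<Sum>i\<in>UNIV. \<bar>x $ i\<bar>)"

definition l1_opnorm :: "(real^'a::finite \<Rightarrow> real^'a) \<Rightarrow> real" where
  "l1_opnorm f = (SUP x\<in>{x. norm1 x = 1}. norm1 (f x))"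

text \<open>Image of an infinite word under a substitution with non-empty images:
  the i-th letter of sigma(w) lies within sigma(w_0 ... w_i).\<close>
definition subst_inf :: "('a \<Rightarrow> 'a list) \<Rightarrow> (nat \<Rightarrow> 'a) \<Rightarrow> (nat \<Rightarrow> 'a)" where
  "subst_inf \<sigma> w = (\<lambda>i. concat (map \<sigma> (map w [0..<Suc i])) ! i)"

definition fixed_point :: "(nat \<Rightarrow> ('a \<Rightarrow> 'a list)) \<Rightarrow> (nat \<Rightarrow> (nat \<Rightarrow> 'a)) \<Rightarrow> bool" where
  "fixed_point s u \<longleftrightarrow> (\<forall>k. subst_inf (s k) (u (Suc k)) = u k)"

definition prefix_inf :: "(nat \<Rightarrow> 'a) \<Rightarrow> nat \<Rightarrow> 'a list" where
  "prefix_inf w n = map w [0..<n]"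

definition Wset :: "(nat \<Rightarrow> 'a::finite) \<Rightarrow> 'a \<Rightarrow> (real^'a) set" where
  "Wset w a = {ab (prefix_inf w n) | n. w n = a}"

definition Rset :: "real^'a::finite \<Rightarrow> (nat \<Rightarrow> 'a) \<Rightarrow> 'a \<Rightarrow> (real^'a) set" where
  "Rset v w a = closure (proj v ` Wset w a)"

definition rauzy :: "real^'a::finite \<Rightarrow> (nat \<Rightarrow> 'a) \<Rightarrow> (real^'a) set" where
  "rauzy v w = (\<Union>a. Rset v w a)"

definition transition :: "'a::finite \<Rightarrow> real^'a \<Rightarrow> ('a \<Rightarrow> 'a list) \<Rightarrow> 'a \<Rightarrow> bool" where
  "transition a t \<sigma> b \<longleftrightarrow> (\<exists>p q. \<sigma> a = p @ b # q \<and> ab p = t)"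

definition left_path :: "(nat \<Rightarrow> ('a::finite \<Rightarrow> 'a list)) \<Rightarrow> 'a \<Rightarrow> (nat \<Rightarrow> 'a) \<Rightarrow> (nat \<Rightarrow> real^'a) \<Rightarrow> bool" where
  "left_path s a st t \<longleftrightarrow> st 0 = a \<and> (\<forall>k. transition (st (Suc k)) (t k) (s k) (st k))"

definition path_set :: "(nat \<Rightarrow> ('a::finite \<Rightarrow> 'a list)) \<Rightarrow> real^'a \<Rightarrow> 'a \<Rightarrow> (real^'a) set" where
  "path_set s v a = {(\<Sum>n. proj v (Mint s 0 n *v t n)) | st t. left_path s a st t}"

end

(*
  Desubstituting the fixed point level by level writes the abelianised prefix in front of an
  occurrence of a in u_0 as a finite sum of the vectors M_[0,n) t_n, where the t_n label a path of
  the prefix automaton ending in a. The positions decrease along the desubstitution and must reach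
  0, because primitivity on at least two letters forbids the first letters of the u_n from being
  chained by one-letter images forever. Conversely, every letter occurs in every u_n, so each
  finite piece of a left-infinite path lifts to an occurrence of a in u_0, and strong convergence
  makes the remaining tail of the series small; hence the path sums lie in the closure of
  pi_v(W_a(u_0)). The set of path sums is bounded by the convergent series and closed by a
  diagonal argument over the finitely many transition labels, so it is compact, and it does not
  involve u.
*)

theory Submission
  imports Defs "HOL-Library.Diagonal_Subsequence"
begin

lemma ab_Nil [simp]: "ab [] = 0"
  by (simp add: ab_def vec_eq_iff)

lemma ab_append: "ab (xs @ ys) = ab xs + ab ys"
  by (simp add: ab_def vec_eq_iff)

lemma ab_concat_map: "ab (concat (map \<sigma> xs)) = ab_mat \<sigma> *v ab xs"
proof (induction xs)
  case (Cons x xs)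
  have "ab (\<sigma> x) = ab_mat \<sigma> *v ab [x]"
    by (simp add: ab_def ab_mat_def vec_eq_iff matrix_vector_mult_def if_distrib cong: if_cong)
  then show ?case
    using Cons ab_append[of "[x]" xs] by (simp add: ab_append matrix_vector_right_distrib)
qed simp

lemma norm1_ab: "norm1 (ab w) = real (length w)"
proof (induction w)
  case (Cons x w)
  have "norm1 (ab (x # w)) = (\<Sum>b\<in>UNIV. real (count_list w b) + (if x = b then 1 else 0))"
    by (simp add: norm1_def ab_def) (rule sum.cong, auto)
  then show ?case
    using Cons by (simp add: sum.distrib norm1_def ab_def)
qed (simp add: norm1_def)

definition subst_prefix :: "('a \<Rightarrow> 'a list) \<Rightarrow> (nat \<Rightarrow> 'a) \<Rightarrow> nat \<Rightarrow> 'a list" where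
  "subst_prefix \<sigma> w n = concat (map \<sigma> (prefix_inf w n))"

lemma subst_prefix_Suc: "subst_prefix \<sigma> w (Suc n) = subst_prefix \<sigma> w n @ \<sigma> (w n)"
  by (simp add: subst_prefix_def prefix_inf_def)

lemma ab_subst_prefix: "ab (subst_prefix \<sigma> w n) = ab_mat \<sigma> *v ab (prefix_inf w n)"
  by (simp add: subst_prefix_def ab_concat_map)

lemma length_concat_map_ge:
  "\<forall>a. \<sigma> a \<noteq> [] \<Longrightarrow> length xs \<le> length (concat (map \<sigma> xs))"
proof (induction xs)
  case (Cons x xs)
  then have "1 \<le> length (\<sigma> x)"
    by (simp add: Suc_le_eq)
  with Cons show ?case
    by simp
qed simp

lemma length_subst_prefix_ge: "\<forall>a. \<sigma> a \<noteq> [] \<Longrightarrow> n \<le> length (subst_prefix \<sigma> w n)"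
  using length_concat_map_ge[of \<sigma> "prefix_inf w n"] by (simp add: subst_prefix_def prefix_inf_def)

lemma subst_prefix_mono: "m \<le> n \<Longrightarrow> \<exists>ys. subst_prefix \<sigma> w n = subst_prefix \<sigma> w m @ ys"
  by (induction n rule: dec_induct) (auto simp: subst_prefix_Suc)

lemma nth_subst_prefix:
  assumes ne: "\<forall>a. \<sigma> a \<noteq> []" and i: "i < length (subst_prefix \<sigma> w n)"
  shows "subst_prefix \<sigma> w n ! i = subst_inf \<sigma> w i"
proof -
  obtain ys where ys: "subst_prefix \<sigma> w (max n (Suc i)) = subst_prefix \<sigma> w n @ ys"
    using subst_prefix_mono[of n "max n (Suc i)"] by auto
  obtain zs where zs: "subst_prefix \<sigma> w (max n (Suc i)) = subst_prefix \<sigma> w (Suc i) @ zs"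
    using subst_prefix_mono[of "Suc i" "max n (Suc i)"] by auto
  have "i < length (subst_prefix \<sigma> w (Suc i))"
    using length_subst_prefix_ge[OF ne, of "Suc i" w] by simp
  then show ?thesis
    using ys zs i by (metis nth_append subst_inf_def subst_prefix_def prefix_inf_def)
qed

lemma prefix_subst_inf:
  assumes "\<forall>a. \<sigma> a \<noteq> []" and "i \<le> length (subst_prefix \<sigma> w n)"
  shows "prefix_inf (subst_inf \<sigma> w) i = take i (subst_prefix \<sigma> w n)"
  by (rule nth_equalityI) (use assms in \<open>auto simp: prefix_inf_def nth_subst_prefix\<close>)

lemma transition_if_mem: "c \<in> set (\<sigma> b) \<Longrightarrow> \<exists>t. transition b t \<sigma> c"
  by (metis split_list transition_def)

lemma lift_transition:
  assumes ne: "\<forall>a. \<sigma> a \<noteq> []" and tr: "transition (w i) t \<sigma> c"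
  shows "\<exists>i'. subst_inf \<sigma> w i' = c
    \<and> ab (prefix_inf (subst_inf \<sigma> w) i') = ab_mat \<sigma> *v ab (prefix_inf w i) + t"
proof -
  obtain p q where pq: "\<sigma> (w i) = p @ c # q" "ab p = t"
    using tr by (auto simp: transition_def)
  define i' where "i' = length (subst_prefix \<sigma> w i) + length p"
  have image_split: "subst_prefix \<sigma> w (Suc i) = subst_prefix \<sigma> w i @ p @ c # q"
    using pq(1) by (simp add: subst_prefix_Suc)
  then have i': "i' < length (subst_prefix \<sigma> w (Suc i))"
    by (simp add: i'_def)
  have "subst_inf \<sigma> w i' = c"
    using nth_subst_prefix[OF ne i', symmetric] image_split by (simp add: i'_def nth_append)
  moreover have "prefix_inf (subst_inf \<sigma> w) i' = subst_prefix \<sigma> w i @ p"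
    using prefix_subst_inf[OF ne, of i' w "Suc i"] i' image_split by (simp add: i'_def)
  ultimately show ?thesis
    using pq(2) by (auto simp: ab_append ab_subst_prefix)
qed

lemma singleton_image_if_short_subst_prefix:
  assumes ne: "\<forall>a. \<sigma> a \<noteq> []" and "0 < n" and short: "length (subst_prefix \<sigma> w n) \<le> n"
  shows "\<sigma> (w 0) = [subst_inf \<sigma> w 0]"
proof -
  obtain n' where n': "n = Suc n'"
    using \<open>0 < n\<close> gr0_implies_Suc by blast
  have "subst_prefix \<sigma> w n = \<sigma> (w 0) @ concat (map \<sigma> (map w [1..<n]))"
    unfolding subst_prefix_def prefix_inf_def n' by (subst upt_conv_Cons) auto
  moreover have "n' \<le> length (concat (map \<sigma> (map w [1..<n])))"
    using length_concat_map_ge[OF ne, of "map w [1..<n]"] n' by (simp del: upt_Suc)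
  ultimately have "length (\<sigma> (w 0)) \<le> 1"
    using short n' by simp
  moreover have "\<sigma> (w 0) \<noteq> []"
    using ne by simp
  ultimately obtain x where "\<sigma> (w 0) = [x]"
    by (metis One_nat_def Suc_length_conv le_SucE le_zero_eq length_0_conv)
  then show ?thesis
    by (simp add: subst_inf_def)
qed

(* The last conjunct covers the only case in which the position does not decrease. *)
lemma desubstitute:
  assumes ne: "\<forall>a. \<sigma> a \<noteq> []"
  shows "\<exists>j t. j \<le> i \<and> transition (w j) t \<sigma> (subst_inf \<sigma> w i)
    \<and> ab (prefix_inf (subst_inf \<sigma> w) i) = ab_mat \<sigma> *v ab (prefix_inf w j) + t
    \<and> (j = i \<longrightarrow> 0 < i \<longrightarrow> \<sigma> (w 0) = [subst_inf \<sigma> w 0])"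
proof -
  define j where "j = (LEAST j. i < length (subst_prefix \<sigma> w (Suc j)))"
  have j_upper: "i < length (subst_prefix \<sigma> w (Suc j))"
    unfolding j_def by (rule LeastI[of _ i]) (use length_subst_prefix_ge[OF ne, of "Suc i" w] in simp)
  have j_lower: "length (subst_prefix \<sigma> w j) \<le> i"
  proof (cases j)
    case (Suc j')
    then show ?thesis
      using not_less_Least[of j' "\<lambda>j. i < length (subst_prefix \<sigma> w (Suc j))"] j_def by simp
  qed (simp add: subst_prefix_def prefix_inf_def)
  define p where "p = take (i - length (subst_prefix \<sigma> w j)) (\<sigma> (w j))"
  define q where "q = drop (Suc (i - length (subst_prefix \<sigma> w j))) (\<sigma> (w j))"
  have "i - length (subst_prefix \<sigma> w j) < length (\<sigma> (w j))"
    using j_lower j_upper by (simp add: subst_prefix_Suc)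
  then have "\<sigma> (w j) = p @ subst_prefix \<sigma> w (Suc j) ! i # q"
    using j_lower id_take_nth_drop[of "i - length (subst_prefix \<sigma> w j)" "\<sigma> (w j)"]
    by (simp add: p_def q_def subst_prefix_Suc nth_append)
  then have tr: "transition (w j) (ab p) \<sigma> (subst_inf \<sigma> w i)"
    unfolding transition_def nth_subst_prefix[OF ne j_upper] by blast
  have "prefix_inf (subst_inf \<sigma> w) i = subst_prefix \<sigma> w j @ p"
    using prefix_subst_inf[OF ne, of i w "Suc j"] j_upper j_lower
    by (simp add: subst_prefix_Suc p_def)
  then have ab_eq: "ab (prefix_inf (subst_inf \<sigma> w) i) = ab_mat \<sigma> *v ab (prefix_inf w j) + ab p"
    by (simp add: ab_append ab_subst_prefix)
  have "j \<le> length (subst_prefix \<sigma> w j)"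
    by (rule length_subst_prefix_ge[OF ne])
  then have j_le: "j \<le> i"
    using j_lower by simp
  have "\<sigma> (w 0) = [subst_inf \<sigma> w 0]" if "j = i" "0 < i"
    using singleton_image_if_short_subst_prefix[OF ne, of j w] j_lower that by simp
  then show ?thesis
    using j_le tr ab_eq by blast
qed

lemma decseq_nat_eventually_constant:
  fixes f :: "nat \<Rightarrow> nat"
  assumes "\<And>k. f (Suc k) \<le> f k"
  obtains m where "\<And>k. m \<le> k \<Longrightarrow> f k = f m"
proof -
  have dec: "f k \<le> f m" if "m \<le> k" for m k
    using decseq_Suc_iff[of f] assms decseqD that by blast
  obtain m where m: "f m = (LEAST x. x \<in> range f)"
    using LeastI[of "\<lambda>x. x \<in> range f" "f 0"] by auto
  have "f k = f m" if "m \<le> k" for k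
    using dec[OF that] Least_le[of "\<lambda>x. x \<in> range f" "f k"] m by simp
  then show ?thesis
    using that by blast
qed

lemma mprod_add: "mprod s k (m + n) = mprod s k m ** mprod s (k + m) n"
  by (induction n) (simp_all add: matrix_mul_assoc add.assoc)

lemma Mint_0 [simp]: "Mint s 0 n = mprod s 0 n"
  by (simp add: Mint_def)

lemma mprod_column_of_singleton_chain:
  assumes "\<And>k. n \<le> k \<Longrightarrow> k < n + m \<Longrightarrow> s k (b (Suc k)) = [b k]"
  shows "mprod s n m $ i $ b (n + m) = (if i = b n then 1 else 0)"
  using assms
proof (induction m)
  case (Suc m)
  have column: "ab_mat (s (n + m)) $ l $ b (n + Suc m) = (if l = b (n + m) then 1 else 0)" for l
    using Suc.prems[of "n + m"] by (simp add: ab_mat_def)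
  have "mprod s n (Suc m) $ i $ b (n + Suc m)
      = (\<Sum>l\<in>UNIV. mprod s n m $ i $ l * (if l = b (n + m) then 1 else 0))"
    by (simp add: matrix_matrix_mult_def column del: add_Suc_right)
  also have "\<dots> = mprod s n m $ i $ b (n + m)"
    by (simp add: if_distrib cong: if_cong)
  finally show ?case
    using Suc by simp
qed (simp add: mat_def)

locale primitive_fixed_point =
  fixes s :: "nat \<Rightarrow> ('a::finite \<Rightarrow> 'a list)" and u :: "nat \<Rightarrow> nat \<Rightarrow> 'a"
  assumes nonempty_images: "\<And>k. \<forall>a. s k a \<noteq> []"
    and fixed_point: "fixed_point s u"
    and primitive: "\<And>n. \<exists>k\<ge>n. \<forall>i j. Mint s n k $ i $ j > 0"
    and two_letters: "CARD('a) \<ge> 2"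
begin

lemma subst_inf_level: "subst_inf (s k) (u (Suc k)) = u k"
  using fixed_point by (simp add: fixed_point_def)

lemma no_singleton_chain: "\<not> (\<forall>k\<ge>n. s k (b (Suc k)) = [b k])"
proof
  assume chain: "\<forall>k\<ge>n. s k (b (Suc k)) = [b k]"
  obtain K where K: "K \<ge> n" "\<forall>i j. Mint s n K $ i $ j > 0"
    using primitive by blast
  obtain x y :: 'a where "x \<noteq> y"
    using two_letters card_le_Suc0_iff_eq[of "UNIV :: 'a set"] by force
  then obtain z where z: "z \<noteq> b n"
    by (metis (full_types))
  have "Mint s n K $ z $ b K = 0"
    using mprod_column_of_singleton_chain[of n "K - n" s b z] chain K(1) z by (simp add: Mint_def)
  then show False
    using K(2) by (metis less_irrefl)
qed

lemma occurs_if_positive_entry: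
  "mprod s N m $ c $ e > 0 \<Longrightarrow> u (N + m) j = e \<Longrightarrow> \<exists>i. u N i = c"
proof (induction m arbitrary: c e j)
  case (Suc m)
  have "0 < (\<Sum>l\<in>UNIV. mprod s N m $ c $ l * ab_mat (s (N + m)) $ l $ e)"
    using Suc.prems(1) by (simp add: matrix_matrix_mult_def)
  then obtain l where l: "0 < mprod s N m $ c $ l * ab_mat (s (N + m)) $ l $ e"
    by (metis (no_types, lifting) linorder_not_le sum_nonpos)
  then have entry: "mprod s N m $ c $ l > 0" and "ab_mat (s (N + m)) $ l $ e > 0"
    by (auto simp: zero_less_mult_iff ab_mat_def)
  then have "l \<in> set (s (N + m) e)"
    using count_list_0_iff[of "s (N + m) e" l] by (auto simp: ab_mat_def)
  then obtain t where "transition (u (Suc (N + m)) j) t (s (N + m)) l"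
    using Suc.prems(2) transition_if_mem by fastforce
  then obtain i where "u (N + m) i = l"
    using lift_transition[OF nonempty_images] by (metis subst_inf_level)
  then show ?case
    using Suc.IH[OF entry] by blast
qed (auto simp: mat_def split: if_splits)

lemma every_letter_occurs: "\<exists>i. u N i = c"
proof -
  obtain K where "K \<ge> N" "\<forall>i j. Mint s N K $ i $ j > 0"
    using primitive by blast
  then show ?thesis
    using occurs_if_positive_entry[of N "K - N" c "u K 0" 0] by (simp add: Mint_def)
qed

lemma lift_path:
  assumes path: "left_path s a st t" and "u m i = st m"
  shows "\<exists>i0. u 0 i0 = a \<and> ab (prefix_inf (u 0) i0)
           = (\<Sum>k<m. mprod s 0 k *v t k) + mprod s 0 m *v ab (prefix_inf (u m) i)"
  using assms(2)
proof (induction m arbitrary: i)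
  case 0
  then show ?case
    using path by (auto simp: left_path_def)
next
  case (Suc m)
  have "transition (u (Suc m) i) (t m) (s m) (st m)"
    using path Suc.prems by (simp add: left_path_def)
  then obtain i' where "u m i' = st m"
    and "ab (prefix_inf (u m) i') = ab_mat (s m) *v ab (prefix_inf (u (Suc m)) i) + t m"
    using lift_transition[OF nonempty_images] by (metis subst_inf_level)
  then show ?case
    using Suc.IH[of i'] by (auto simp: matrix_vector_mul_assoc algebra_simps)
qed

lemma desubstitute_level:
  "\<forall>k i. \<exists>j t. j \<le> i \<and> transition (u (Suc k) j) t (s k) (u k i)
    \<and> ab (prefix_inf (u k) i) = ab_mat (s k) *v ab (prefix_inf (u (Suc k)) j) + t
    \<and> (j = i \<longrightarrow> 0 < i \<longrightarrow> s k (u (Suc k) 0) = [u k 0])"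
  using desubstitute[OF nonempty_images] by (metis subst_inf_level)

lemma prefix_path_decomposition:
  "\<exists>st t m. st 0 = u N i \<and> (\<forall>k. transition (st (Suc k)) (t k) (s (N + k)) (st k))
     \<and> (\<forall>k\<ge>m. t k = 0) \<and> ab (prefix_inf (u N) i) = (\<Sum>k<m. mprod s N k *v t k)"
proof -
  obtain J T where JT: "\<And>k i. J k i \<le> i" "\<And>k i. transition (u (Suc k) (J k i)) (T k i) (s k) (u k i)"
    "\<And>k i. ab (prefix_inf (u k) i) = ab_mat (s k) *v ab (prefix_inf (u (Suc k)) (J k i)) + T k i"
    "\<And>k i. J k i = i \<Longrightarrow> 0 < i \<Longrightarrow> s k (u (Suc k) 0) = [u k 0]"
    using desubstitute_level by metis
  define pos where "pos = rec_nat i (\<lambda>k j. J (N + k) j)"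
  have pos_0: "pos 0 = i" and pos_Suc: "pos (Suc k) = J (N + k) (pos k)" for k
    by (simp_all add: pos_def)
  define st where "st k = u (N + k) (pos k)" for k
  define t where "t k = T (N + k) (pos k)" for k
  have path: "transition (st (Suc k)) (t k) (s (N + k)) (st k)" for k
    using JT(2) by (simp add: st_def t_def pos_Suc)
  have partial: "ab (prefix_inf (u N) i)
      = (\<Sum>k<m. mprod s N k *v t k) + mprod s N m *v ab (prefix_inf (u (N + m)) (pos m))" for m
  proof (induction m)
    case (Suc m)
    then show ?case
      using JT(3)[of "N + m" "pos m"]
      by (simp add: pos_Suc t_def matrix_vector_mul_assoc algebra_simps)
  qed (simp add: pos_0)
  obtain m where m: "\<And>k. m \<le> k \<Longrightarrow> pos k = pos m"
    using decseq_nat_eventually_constant[of pos] JT(1) pos_Suc by metis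
  have "pos m = 0"
  proof (rule ccontr)
    assume "pos m \<noteq> 0"
    have "s k (u (Suc k) 0) = [u k 0]" if "N + m \<le> k" for k
      using JT(4)[of k "pos (k - N)"] m[of "k - N"] m[of "Suc (k - N)"] pos_Suc[of "k - N"] that \<open>pos m \<noteq> 0\<close>
      by (simp add: Suc_diff_le)
    then show False
      using no_singleton_chain[of "N + m" "\<lambda>k. u k 0"] by blast
  qed
  then have "t k = 0" if "m \<le> k" for k
    using JT(1,3)[of "N + k" 0] m[OF that] by (simp add: t_def prefix_inf_def)
  moreover have "prefix_inf (u (N + m)) (pos m) = []"
    using \<open>pos m = 0\<close> by (simp add: prefix_inf_def)
  ultimately show ?thesis
    using partial[of m] path by (intro exI[of _ st] exI[of _ t] exI[of _ m]) (simp add: st_def pos_0)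
qed

end

lemma hsum_add: "hsum (x + y) = hsum x + hsum y"
  by (simp add: hsum_def sum.distrib)

lemma hsum_scaleR: "hsum (c *\<^sub>R x) = c * hsum x"
  by (simp add: hsum_def sum_distrib_left)

lemma linear_proj: "linear (proj v)"
  by (rule linearI) (simp_all add: proj_def hsum_add hsum_scaleR algebra_simps add_divide_distrib)

lemma linear_proj_mprod: "linear (\<lambda>z. proj v (mprod s k n *v z))"
  using linear_compose[OF matrix_vector_mul_linear linear_proj] by (simp add: o_def)

lemma norm_le_norm1: "norm x \<le> norm1 x"
  using norm_le_l1_cart by (simp add: norm1_def)

lemma norm1_le_card_norm: "norm1 (x :: real^'a::finite) \<le> real CARD('a) * norm x"
proof -
  have "norm1 x \<le> (\<Sum>i\<in>(UNIV :: 'a set). norm x)"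
    unfolding norm1_def by (rule sum_mono) (rule component_le_norm_cart)
  then show ?thesis
    by simp
qed

lemma norm1_scaleR: "norm1 (c *\<^sub>R x) = \<bar>c\<bar> * norm1 x"
  by (simp add: norm1_def sum_distrib_left abs_mult)

lemma norm1_le_l1_opnorm:
  fixes f :: "real^'a::finite \<Rightarrow> real^'a"
  assumes lin: "linear f"
  shows "norm1 (f x) \<le> l1_opnorm f * norm1 x"
proof (cases "x = 0")
  case True
  then show ?thesis
    using linear_0[OF lin] by (simp add: norm1_def)
next
  case False
  have bl: "bounded_linear f"
    using lin linear_conv_bounded_linear by blast
  have bdd: "bdd_above ((\<lambda>x. norm1 (f x)) ` {x. norm1 x = 1})"
  proof (rule bdd_aboveI2)
    fix x :: "real^'a"
    assume "x \<in> {x. norm1 x = 1}"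
    then have "norm x \<le> 1"
      using norm_le_norm1[of x] by simp
    then have "norm (f x) \<le> onorm f"
      using onorm[OF bl, of x] onorm_pos_le[OF bl] by (meson mult_left_le order_trans)
    then show "norm1 (f x) \<le> real CARD('a) * onorm f"
      using norm1_le_card_norm[of "f x"] by (meson mult_left_mono of_nat_0_le_iff order_trans)
  qed
  define c where "c = norm1 x"
  have "c > 0"
    using False norm_le_norm1[of x] unfolding c_def by (metis zero_less_norm_iff order_less_le_trans)
  then have "norm1 ((1 / c) *\<^sub>R x) = 1"
    by (simp add: norm1_scaleR c_def)
  then have "norm1 (f ((1 / c) *\<^sub>R x)) \<le> l1_opnorm f"
    unfolding l1_opnorm_def by (intro cSUP_upper[OF _ bdd]) simp
  moreover have "f x = c *\<^sub>R f ((1 / c) *\<^sub>R x)"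
    using \<open>c > 0\<close> linear_scale[OF lin] by simp
  ultimately show ?thesis
    using \<open>c > 0\<close> by (simp add: norm1_scaleR c_def mult.commute)
qed

lemma l1_opnorm_nonneg:
  fixes f :: "real^'a::finite \<Rightarrow> real^'a"
  assumes "linear f"
  shows "0 \<le> l1_opnorm f"
proof -
  fix i :: 'a
  have "0 \<le> norm1 (f (axis i 1))"
    by (simp add: norm1_def sum_nonneg)
  also have "\<dots> \<le> l1_opnorm f"
    using norm1_le_l1_opnorm[OF assms, of "axis i 1"] by (simp add: norm1_def axis_def)
  finally show ?thesis .
qed

lemma diagonal_subseq_eventually_constant:
  fixes f :: "nat \<Rightarrow> nat \<Rightarrow> 'b"
  assumes fin: "\<And>k. finite (range (\<lambda>m. f m k))"
  obtains r g where "strict_mono r" "\<And>k m. k < m \<Longrightarrow> f (r m) k = g k"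
proof -
  interpret subseqs "\<lambda>k r. \<forall>m. f (r m) k = f (r 0) k"
  proof
    fix k and q :: "nat \<Rightarrow> nat"
    have "finite (range (\<lambda>m. f (q m) k))"
      using fin[of k] by (rule finite_subset[rotated]) auto
    then obtain y where "infinite ((\<lambda>m. f (q m) k) -` {y})"
      using inf_img_fin_domE[of "\<lambda>m. f (q m) k" UNIV] infinite_UNIV_nat by blast
    then obtain r' :: "nat \<Rightarrow> nat" where "strict_mono r'" "\<forall>n. f (q (r' n)) k = y"
      using infinite_enumerate by blast
    then show "\<exists>r' :: nat \<Rightarrow> nat. strict_mono r' \<and> (\<forall>m. f ((q \<circ> r') m) k = f ((q \<circ> r') 0) k)"
      by (intro exI[of _ r']) auto
  qed
  have stable: "\<forall>m. f ((diagseq \<circ> (+) (Suc k)) m) k = f ((diagseq \<circ> (+) (Suc k)) 0) k" for k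
    by (rule diagseq_holds) (metis comp_apply)
  have "f (diagseq (Suc k + j)) k = f (diagseq (Suc k)) k" for k j
    using stable[of k] by simp
  then have "f (diagseq m) k = f (diagseq (Suc k)) k" if "k < m" for k m
    using that less_iff_Suc_add by auto
  then show ?thesis
    using that[OF subseq_diagseq, of "\<lambda>k. f (diagseq (Suc k)) k"] by blast
qed

locale strongly_convergent =
  fixes s :: "nat \<Rightarrow> ('a::finite \<Rightarrow> 'a list)" and S :: "('a \<Rightarrow> 'a list) set" and v :: "real^'a"
  assumes finite_S: "finite S" and s_in_S: "\<And>k. s k \<in> S"
    and summable_proj_norm: "summable (\<lambda>n. l1_opnorm (\<lambda>z. proj v (Mint s 0 n *v z)))"
begin

definition max_len :: real where
  "max_len = Max ((\<lambda>(\<sigma>, a). real (length (\<sigma> a))) ` (S \<times> UNIV))"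

definition proj_norm :: "nat \<Rightarrow> real" where
  "proj_norm n = l1_opnorm (\<lambda>z. proj v (mprod s 0 n *v z))"

definition tail :: "nat \<Rightarrow> real" where
  "tail N = (\<Sum>n. max_len * proj_norm (n + N))"

lemma length_le_max_len: "real (length (s k a)) \<le> max_len"
  unfolding max_len_def by (rule Max_ge) (use finite_S s_in_S in auto)

lemma max_len_nonneg: "0 \<le> max_len"
  using length_le_max_len[of 0 undefined] by linarith

lemma proj_norm_nonneg: "0 \<le> proj_norm n"
  unfolding proj_norm_def
  by (rule l1_opnorm_nonneg[OF linear_proj_mprod])

lemma summable_max_len_proj_norm: "summable (\<lambda>n. max_len * proj_norm n)"
  using summable_proj_norm by (simp add: proj_norm_def summable_mult)

lemma norm1_transition_le: "transition b t (s k) c \<Longrightarrow> norm1 t \<le> max_len"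
  unfolding transition_def using length_le_max_len[of k b] by (auto simp: norm1_ab)

lemma norm1_left_path_le: "left_path s a st t \<Longrightarrow> norm1 (t n) \<le> max_len"
  unfolding left_path_def using norm1_transition_le by blast

lemma norm_path_term_le:
  assumes "norm1 t \<le> max_len"
  shows "norm (proj v (mprod s 0 n *v t)) \<le> max_len * proj_norm n"
proof -
  have "norm (proj v (mprod s 0 n *v t)) \<le> norm1 (proj v (mprod s 0 n *v t))"
    by (rule norm_le_norm1)
  also have "\<dots> \<le> proj_norm n * norm1 t"
    unfolding proj_norm_def
    by (rule norm1_le_l1_opnorm[OF linear_proj_mprod])
  also have "\<dots> \<le> proj_norm n * max_len"
    using assms proj_norm_nonneg by (rule mult_left_mono)
  finally show ?thesis
    by (simp add: mult.commute)
qed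

lemma tail_nonneg: "0 \<le> tail N"
  unfolding tail_def
  by (rule suminf_nonneg) (use summable_max_len_proj_norm max_len_nonneg proj_norm_nonneg in auto)

lemma tail_tendsto_zero: "tail \<longlonglongrightarrow> 0"
proof -
  have "(\<lambda>N. suminf (\<lambda>n. max_len * proj_norm n) - (\<Sum>n<N. max_len * proj_norm n)) \<longlonglongrightarrow> 0"
    using tendsto_diff[OF tendsto_const[of "suminf (\<lambda>n. max_len * proj_norm n)"]
        summable_LIMSEQ[OF summable_max_len_proj_norm]] by simp
  then show ?thesis
    unfolding tail_def using suminf_minus_initial_segment[OF summable_max_len_proj_norm] by simp
qed

lemma norm_path_remainder_le:
  assumes "\<And>n. norm1 (t n) \<le> max_len"
  shows "norm ((\<Sum>n. proj v (mprod s 0 n *v t n)) - (\<Sum>n<N. proj v (mprod s 0 n *v t n))) \<le> tail N"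
proof -
  have summable: "summable (\<lambda>n. proj v (mprod s 0 n *v t n))"
    by (rule summable_comparison_test'[OF summable_max_len_proj_norm]) (use norm_path_term_le assms in auto)
  have "(\<Sum>n. proj v (mprod s 0 n *v t n)) - (\<Sum>n<N. proj v (mprod s 0 n *v t n))
      = (\<Sum>n. proj v (mprod s 0 (n + N) *v t (n + N)))"
    using suminf_minus_initial_segment[OF summable, of N] by simp
  also have "norm \<dots> \<le> tail N"
    unfolding tail_def
    by (rule norm_suminf_le) (use norm_path_term_le assms summable_max_len_proj_norm in auto)
  finally show ?thesis .
qed

lemma norm_shifted_partial_sum_le:
  assumes "\<And>n. norm1 (t n) \<le> max_len"
  shows "norm (\<Sum>n<m. proj v (mprod s 0 (N + n) *v t n)) \<le> tail N"
proof -
  have "norm (\<Sum>n<m. proj v (mprod s 0 (N + n) *v t n)) \<le> (\<Sum>n<m. max_len * proj_norm (n + N))"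
    by (rule order_trans[OF norm_sum sum_mono]) (use norm_path_term_le assms in \<open>auto simp: add.commute\<close>)
  also have "\<dots> \<le> tail N"
    unfolding tail_def
    by (rule sum_le_suminf) (use summable_max_len_proj_norm max_len_nonneg proj_norm_nonneg in auto)
  finally show ?thesis .
qed

lemma dist_path_sums_le:
  assumes "\<And>n. norm1 (t n) \<le> max_len" "\<And>n. norm1 (t' n) \<le> max_len"
    and "\<And>n. n < N \<Longrightarrow> t n = t' n"
  shows "dist (\<Sum>n. proj v (mprod s 0 n *v t n)) (\<Sum>n. proj v (mprod s 0 n *v t' n)) \<le> 2 * tail N"
proof -
  let ?sum = "\<lambda>t. \<Sum>n. proj v (mprod s 0 n *v t n)"
  let ?partial = "\<Sum>n<N. proj v (mprod s 0 n *v t n)"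
  have "?partial = (\<Sum>n<N. proj v (mprod s 0 n *v t' n))"
    using assms(3) by simp
  then have "norm (?sum t' - ?partial) \<le> tail N"
    using norm_path_remainder_le[OF assms(2)] by simp
  moreover have "norm (?sum t - ?partial) \<le> tail N"
    using norm_path_remainder_le[OF assms(1)] .
  moreover have "dist (?sum t) (?sum t') \<le> norm (?sum t - ?partial) + norm (?sum t' - ?partial)"
    unfolding dist_norm using norm_diff_triangle_ineq[of "?sum t" ?partial ?partial "?sum t'"]
    by (simp add: norm_minus_commute)
  ultimately show ?thesis
    by linarith
qed

lemma norm_path_set_le: "y \<in> path_set s v a \<Longrightarrow> norm y \<le> tail 0"
  unfolding path_set_def using norm_path_remainder_le[of _ 0] norm1_left_path_le by fastforce

lemma finite_transition_labels: "finite {t. \<exists>b k c. transition b t (s k) c}"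
proof (rule finite_subset)
  show "{t. \<exists>b k c. transition b t (s k) c} \<subseteq> ab ` {p :: 'a list. length p \<le> nat \<lceil>max_len\<rceil>}"
  proof safe
    fix t b k c
    assume "transition b t (s k) c"
    then obtain p q where "s k b = p @ c # q" "ab p = t"
      by (auto simp: transition_def)
    moreover from this have "length p \<le> nat \<lceil>max_len\<rceil>"
      using length_le_max_len[of k b] by simp linarith
    ultimately show "t \<in> ab ` {p :: 'a list. length p \<le> nat \<lceil>max_len\<rceil>}"
      by blast
  qed
qed (use finite_lists_length_le[of "UNIV :: 'a set"] in simp)

lemma diagonal_subseq_of_paths:
  fixes st :: "nat \<Rightarrow> nat \<Rightarrow> 'a" and t :: "nat \<Rightarrow> nat \<Rightarrow> real^'a"
  assumes paths: "\<And>m. left_path s a (st m) (t m)"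
  obtains r st' t' where "strict_mono r" "left_path s a st' t'" "\<And>m n. n < m \<Longrightarrow> t (r m) n = t' n"
proof -
  have "finite (range (\<lambda>m. (st m k, t m k)))" for k
  proof (rule finite_subset)
    show "range (\<lambda>m. (st m k, t m k)) \<subseteq> UNIV \<times> {t. \<exists>b k c. transition b t (s k) c}"
      using paths unfolding left_path_def by blast
  qed (simp add: finite_transition_labels)
  then obtain r g where r: "strict_mono r" and g: "\<And>k m. k < m \<Longrightarrow> (st (r m) k, t (r m) k) = g k"
    by (rule diagonal_subseq_eventually_constant[of "\<lambda>m k. (st m k, t m k)"]) blast
  define st' where "st' k = fst (g k)" for k
  define t' where "t' k = snd (g k)" for k
  have "st' 0 = a"
    using paths[of "r 1"] g[of 0 1] by (simp add: left_path_def st'_def prod_eq_iff)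
  moreover have "transition (st' (Suc k)) (t' k) (s k) (st' k)" for k
  proof -
    have "transition (st (r (Suc (Suc k))) (Suc k)) (t (r (Suc (Suc k))) k) (s k) (st (r (Suc (Suc k))) k)"
      using paths by (simp add: left_path_def)
    then show ?thesis
      using g[of k "Suc (Suc k)"] g[of "Suc k" "Suc (Suc k)"] by (simp add: st'_def t'_def prod_eq_iff)
  qed
  ultimately have "left_path s a st' t'"
    by (simp add: left_path_def)
  moreover have "t (r m) n = t' n" if "n < m" for m n
    using g[OF that] by (simp add: t'_def prod_eq_iff)
  ultimately show ?thesis
    using that[OF r] by blast
qed

lemma closed_path_set: "closed (path_set s v a)"
  unfolding closed_sequential_limits
proof (intro allI impI, elim conjE)
  fix x l
  assume "\<forall>m. x m \<in> path_set s v a" and lim: "x \<longlonglongrightarrow> l"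
  then obtain st t where paths: "\<And>m. left_path s a (st m) (t m)"
    and x: "\<And>m. x m = (\<Sum>n. proj v (mprod s 0 n *v t m n))"
    unfolding path_set_def by simp metis
  obtain r st' t' where r: "strict_mono r" and path': "left_path s a st' t'"
    and agree: "\<And>m n. n < m \<Longrightarrow> t (r m) n = t' n"
    using diagonal_subseq_of_paths[where st = st and t = t, OF paths] by blast
  define y where "y = (\<Sum>n. proj v (mprod s 0 n *v t' n))"
  have "dist (x (r m)) y \<le> 2 * tail m" for m
    unfolding x y_def
    by (rule dist_path_sums_le[OF norm1_left_path_le[OF paths] norm1_left_path_le[OF path'] agree])
  then have "dist (x (r m)) y \<le> dist (2 * tail m) 0" for m
    using tail_nonneg[of m] by simp
  then have "(\<lambda>m. x (r m)) \<longlonglongrightarrow> y"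
    by (intro metric_tendsto_imp_tendsto[OF tendsto_mult_right_zero[OF tail_tendsto_zero, where c=2]])
      (simp add: always_eventually)
  moreover have "(\<lambda>m. x (r m)) \<longlonglongrightarrow> l"
    using LIMSEQ_subseq_LIMSEQ[OF lim r] by (simp add: o_def)
  ultimately have "l = y"
    using LIMSEQ_unique by blast
  then show "l \<in> path_set s v a"
    using path' unfolding path_set_def y_def by auto
qed

lemma compact_path_set: "compact (path_set s v a)"
proof -
  have "bounded (path_set s v a)"
    using norm_path_set_le by (auto simp: bounded_iff)
  then show ?thesis
    using closed_path_set compact_eq_bounded_closed by blast
qed

end

locale rauzy_fractal_setting = primitive_fixed_point s u + strongly_convergent s S v
  for s :: "nat \<Rightarrow> ('a::finite \<Rightarrow> 'a list)" and u S v
begin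

lemma proj_Wset_subset_path_set: "proj v ` Wset (u 0) a \<subseteq> path_set s v a"
proof
  fix x
  assume "x \<in> proj v ` Wset (u 0) a"
  then obtain i where i: "u 0 i = a" and x: "x = proj v (ab (prefix_inf (u 0) i))"
    by (auto simp: Wset_def)
  obtain st t m where "st 0 = u 0 i" and "\<forall>k. transition (st (Suc k)) (t k) (s k) (st k)"
    and finite: "\<forall>k\<ge>m. t k = 0" and decomposition: "ab (prefix_inf (u 0) i) = (\<Sum>k<m. mprod s 0 k *v t k)"
    using prefix_path_decomposition[of 0 i] by auto
  then have path: "left_path s a st t"
    using i by (simp add: left_path_def)
  have "x = (\<Sum>k<m. proj v (mprod s 0 k *v t k))"
    unfolding x decomposition by (rule linear_sum[OF linear_proj])
  also have "\<dots> = (\<Sum>k. proj v (mprod s 0 k *v t k))"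
    by (rule suminf_finite[symmetric]) (use finite linear_0[OF linear_proj] in auto)
  finally show "x \<in> path_set s v a"
    using path unfolding path_set_def by auto
qed

lemma Wset_point_near_path_sum:
  assumes path: "left_path s a st t"
  obtains x where "x \<in> proj v ` Wset (u 0) a" "dist x (\<Sum>n. proj v (mprod s 0 n *v t n)) \<le> 2 * tail N"
proof -
  obtain i where "u N i = st N"
    using every_letter_occurs by blast
  then obtain i0 where i0: "u 0 i0 = a" and prefix: "ab (prefix_inf (u 0) i0)
      = (\<Sum>k<N. mprod s 0 k *v t k) + mprod s 0 N *v ab (prefix_inf (u N) i)"
    using lift_path[OF path] by blast
  obtain st' t' m where transitions: "\<forall>k. transition (st' (Suc k)) (t' k) (s (N + k)) (st' k)"
    and decomposition: "ab (prefix_inf (u N) i) = (\<Sum>k<m. mprod s N k *v t' k)"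
    using prefix_path_decomposition[of N i] by blast
  let ?sum = "\<Sum>n. proj v (mprod s 0 n *v t n)"
  define head where "head = (\<Sum>k<N. proj v (mprod s 0 k *v t k))"
  define rest where "rest = (\<Sum>k<m. proj v (mprod s 0 (N + k) *v t' k))"
  have "mprod s 0 N *v ab (prefix_inf (u N) i) = (\<Sum>k<m. mprod s 0 N *v (mprod s N k *v t' k))"
    unfolding decomposition by (rule linear_sum[OF matrix_vector_mul_linear])
  also have "\<dots> = (\<Sum>k<m. mprod s 0 (N + k) *v t' k)"
    by (simp add: matrix_vector_mul_assoc mprod_add)
  finally have x: "proj v (ab (prefix_inf (u 0) i0)) = head + rest"
    unfolding prefix head_def rest_def by (simp add: linear_add[OF linear_proj] linear_sum[OF linear_proj])
  have "norm (?sum - head) \<le> tail N"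
    unfolding head_def by (rule norm_path_remainder_le) (rule norm1_left_path_le[OF path])
  moreover have "norm rest \<le> tail N"
    unfolding rest_def by (rule norm_shifted_partial_sum_le) (use transitions norm1_transition_le in blast)
  moreover have "dist (head + rest) ?sum \<le> norm (?sum - head) + norm rest"
    unfolding dist_norm using norm_triangle_ineq4[of rest "?sum - head"] by (simp add: algebra_simps)
  ultimately have "dist (proj v (ab (prefix_inf (u 0) i0))) ?sum \<le> 2 * tail N"
    unfolding x by linarith
  moreover have "proj v (ab (prefix_inf (u 0) i0)) \<in> proj v ` Wset (u 0) a"
    using i0 unfolding Wset_def by auto
  ultimately show ?thesis
    using that by blast
qed

lemma path_set_subset_closure: "path_set s v a \<subseteq> closure (proj v ` Wset (u 0) a)"
proof
  fix y
  assume "y \<in> path_set s v a"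
  then obtain st t where path: "left_path s a st t" and y: "y = (\<Sum>n. proj v (mprod s 0 n *v t n))"
    unfolding path_set_def by auto
  show "y \<in> closure (proj v ` Wset (u 0) a)"
    unfolding closure_approachable
  proof (intro allI impI)
    fix e :: real
    assume "e > 0"
    then have "eventually (\<lambda>N. tail N < e / 2) sequentially"
      using order_tendstoD(2)[OF tail_tendsto_zero, of "e / 2"] by simp
    then obtain N where "tail N < e / 2"
      by (auto simp: eventually_sequentially)
    moreover obtain x where "x \<in> proj v ` Wset (u 0) a" "dist x y \<le> 2 * tail N"
      using Wset_point_near_path_sum[OF path] unfolding y by blast
    ultimately show "\<exists>x\<in>proj v ` Wset (u 0) a. dist x y < e"
      by force
  qed
qed

lemma Rset_eq_path_set: "Rset v (u 0) a = path_set s v a"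
  unfolding Rset_def
  using closure_minimal[OF proj_Wset_subset_path_set closed_path_set] path_set_subset_closure by blast

end

theorem proposition3p29:
  fixes S :: "('a::finite \<Rightarrow> 'a list) set"
    and s :: "nat \<Rightarrow> ('a \<Rightarrow> 'a list)"
    and v :: "real^'a"
  assumes "CARD('a) \<ge> 2"
    and "finite S"
    and "\<forall>\<sigma>\<in>S. unimodular_subst \<sigma>"
    and "\<forall>k. s k \<in> S"
    and "\<forall>n. \<exists>k\<ge>n. \<forall>i j. Mint s n k $ i $ j > 0"
    and "\<forall>i. v $ i \<ge> 0" and "v \<noteq> 0"
    and "summable (\<lambda>n. l1_opnorm (\<lambda>z. proj v (Mint s 0 n *v z)))"
  shows "(\<forall>a u. fixed_point s u \<longrightarrow> Rset v (u 0) a = path_set s v a)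
       \<and> (\<forall>u u'. fixed_point s u \<longrightarrow> fixed_point s u' \<longrightarrow> rauzy v (u 0) = rauzy v (u' 0))
       \<and> (\<forall>u. fixed_point s u \<longrightarrow> compact (rauzy v (u 0)))"
proof -
  interpret strongly_convergent s S v
    using assms by unfold_locales auto
  have Rset_eq: "Rset v (u 0) a = path_set s v a" if "fixed_point s u" for u a
  proof -
    interpret rauzy_fractal_setting s u S v
      using assms that by unfold_locales (auto simp: unimodular_subst_def)
    show ?thesis
      by (rule Rset_eq_path_set)
  qed
  then have "rauzy v (u 0) = (\<Union>a. path_set s v a)" if "fixed_point s u" for u
    using that by (simp add: rauzy_def)
  moreover have "compact (\<Union>a. path_set s v a)"
    by (rule compact_UN) (simp_all add: compact_path_set)
  ultimately show ?thesis
    using Rset_eq by simp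
qed

end
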